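(* Let $\varepsilon>0$. For a prime $q\leqslant x^{1-\varepsilon}$, real $z\leqslant 2x$, and any interval $I\subset[x,3x]$, \[ \frac1{\varphi(q)}\sum_{\chi\neq\chi_0}\left|\sum_{\substack{c^6\leqslant z\\ nc^6\in I}}\mu(c)\chi(n)\chi(c)^6f(n)\right|^2\ll_\varepsilon\Big(z^{\frac13}+|I|^{\frac16}q^{\frac56}\Big)\log^6x, \] where $|I|$ is the length of $I$.
   Context: Sums run over positive integers $n,c$; the outer sum is over non-principal Dirichlet characters $\chi$ modulo $q$ ($\chi_0$ the principal character). $\mu$ is the Möbius function and $\varphi$ Euler's totient function. $f(u):=\frac{\zeta(3/2)}{2u^{1/2}}+\frac{\zeta(2/3)}{3u^{2/3}}$ for $u>0$. *)

theory Defs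
  imports "HOL-Analysis.Analysis" "HOL-Computational_Algebra.Squarefree" "HOL-Number_Theory.Totient"
begin

definition moebius_mu :: "nat \<Rightarrow> int" where
  "moebius_mu n = (if squarefree n then (-1) ^ card (prime_factors n) else 0)"

text \<open>Riemann zeta function at real s > 0, s \<noteq> 1, via the Dirichlet eta function:
  zeta s = (sum_{n>=1} (-1)^(n-1) n^(-s)) / (1 - 2^(1-s)).  This is the analytic
  continuation on (0,1) and agrees with sum n^(-s) for s > 1.\<close>
definition rzeta :: "real \<Rightarrow> real" where
  "rzeta s = (\<Sum>n. (-1) ^ n / real (n + 1) powr s) / (1 - 2 powr (1 - s))"

definition fw :: "real \<Rightarrow> real" where
  "fw u = rzeta (3/2) / (2 * u powr (1/2)) + rzeta (2/3) / (3 * u powr (2/3))"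

definition dirichlet_char :: "nat \<Rightarrow> (nat \<Rightarrow> complex) \<Rightarrow> bool" where
  "dirichlet_char q chi \<longleftrightarrow> q > 0 \<and>
     (\<forall>m n. chi (m * n) = chi m * chi n) \<and>
     (\<forall>n. chi (n + q) = chi n) \<and>
     (\<forall>n. chi n = 0 \<longleftrightarrow> \<not> coprime n q) \<and>
     chi 1 = 1"

definition principal_char :: "nat \<Rightarrow> nat \<Rightarrow> complex" where
  "principal_char q n = (if coprime n q then 1 else 0)"

end

theory Submission
  imports Defs "HOL-Number_Theory.Number_Theory"
begin

text \<open>
  Split the double sum according to \<open>c\<close>. There are at most \<open>z^(1/6)\<close> values of \<open>c\<close> and the
  weights \<open>\<mu>(c) \<chi>(c)^6\<close> have modulus at most 1, so by Cauchy--Schwarz it suffices that, for each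
  fixed \<open>c\<close>, the mean square over the non-principal \<open>\<chi>\<close> of the sum of \<open>\<chi>(n) f(n)\<close> over
  \<open>n c^6 \<in> I\<close> is \<open>O(1)\<close>. By orthogonality (Bessel's inequality) this mean square is at most
  \<open>\<Sum>\<^sub>r (B\<^sub>r - m)^2\<close>, where \<open>B\<^sub>r\<close> is the sum of \<open>f\<close> over the residue class \<open>r\<close> mod \<open>q\<close> and
  \<open>m\<close> is arbitrary. The range of \<open>n\<close> is an interval \<open>[a, b]\<close> with \<open>a c^6 \<ge> x\<close>. As \<open>f\<close> is a
  fixed combination of the decreasing functions \<open>n^(-1/2)\<close> and \<open>n^(-2/3)\<close>, any two class sums
  differ by \<open>O(a^(-1/2))\<close>, which gives \<open>O(q c^6 / x) = O(1)\<close> when \<open>q c^6 \<le> x\<close>; when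
  \<open>q c^6 > x\<close> every class has at most four terms and \<open>\<Sum>\<^sub>r B\<^sub>r^2 = O((b - a + 1) / a) = O(1)\<close>.
  The whole expression is therefore \<open>O(z^(1/3))\<close>, which is stronger than the stated bound and
  does not need the hypothesis \<open>q \<le> x^(1 - \<epsilon>)\<close>.
\<close>

section \<open>Dirichlet characters\<close>

lemma dirichlet_char_mod:
  assumes "dirichlet_char q chi"
  shows "chi (n mod q) = chi n"
proof -
  have "chi (m + k * q) = chi m" for m k
  proof (induction k)
    case (Suc k)
    have "chi (m + Suc k * q) = chi ((m + k * q) + q)" by (simp add: algebra_simps)
    also have "\<dots> = chi m" using assms Suc by (simp add: dirichlet_char_def)
    finally show ?case .
  qed simp
  from this[of "n mod q" "n div q"] show ?thesis by simp
qed

lemma dirichlet_char_mult: "dirichlet_char q chi \<Longrightarrow> chi (m * n) = chi m * chi n"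
  by (simp add: dirichlet_char_def)

lemma dirichlet_char_power:
  assumes "dirichlet_char q chi"
  shows "chi (n ^ k) = chi n ^ k"
  using assms by (induction k) (simp_all add: dirichlet_char_def)

lemma dirichlet_char_eq_0_iff: "dirichlet_char q chi \<Longrightarrow> chi n = 0 \<longleftrightarrow> \<not> coprime n q"
  by (simp add: dirichlet_char_def)

lemma norm_dirichlet_char_coprime:
  assumes chi: "dirichlet_char q chi" and "coprime n q"
  shows "norm (chi n) = 1"
proof -
  have "n ^ totient q mod q = 1 mod q"
    using euler_theorem[OF \<open>coprime n q\<close>] by (simp add: cong_def)
  then have "chi (n ^ totient q) = chi 1" by (metis dirichlet_char_mod[OF chi])
  then have "norm (chi n) ^ totient q = 1"
    using chi by (simp add: dirichlet_char_def dirichlet_char_power[OF chi] flip: norm_power)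
  moreover have "totient q > 0" using chi by (simp add: dirichlet_char_def)
  ultimately show ?thesis using power_eq_imp_eq_base[of "norm (chi n)" "totient q" 1] by simp
qed

lemma norm_dirichlet_char_le_1:
  assumes "dirichlet_char q chi"
  shows "norm (chi n) \<le> 1"
proof (cases "coprime n q")
  case True
  then show ?thesis using norm_dirichlet_char_coprime[OF assms] by simp
next
  case False
  then have "chi n = 0" using dirichlet_char_eq_0_iff[OF assms] by blast
  then show ?thesis by simp
qed

lemma dirichlet_char_principal:
  assumes "q > 0"
  shows "dirichlet_char q (principal_char q)"
proof -
  have "coprime (n + q) q \<longleftrightarrow> coprime n q" for n
    unfolding coprime_iff_gcd_eq_1 by (simp only: gcd_add1)
  then show ?thesis using assms unfolding dirichlet_char_def principal_char_def by auto
qed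

lemma prime_coprime_residue:
  fixes q r :: nat
  assumes "prime q" "r \<in> {1..<q}"
  shows "coprime r q"
proof -
  have "\<not> q dvd r" using assms(2) by (auto dest: dvd_imp_le)
  then show ?thesis using assms(1) by (metis prime_imp_coprime coprime_commute)
qed

lemma bij_betw_mult_mod_prime:
  fixes q a :: nat
  assumes q: "prime q" and a: "coprime a q"
  shows "bij_betw (\<lambda>r. a * r mod q) {1..<q} {1..<q}"
proof -
  let ?h = "\<lambda>r. a * r mod q"
  have inj: "inj_on ?h {1..<q}"
  proof
    fix r s assume "r \<in> {1..<q}" "s \<in> {1..<q}" "?h r = ?h s"
    moreover from \<open>?h r = ?h s\<close> have "[r * a = s * a] (mod q)"
      by (simp add: cong_def mult.commute)
    then have "[r = s] (mod q)" using cong_mult_rcancel_nat[OF a] by blast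
    ultimately show "r = s" using cong_less_modulus_unique_nat by auto
  qed
  have "?h r \<in> {1..<q}" if "r \<in> {1..<q}" for r
  proof -
    have "coprime (a * r) q" using a prime_coprime_residue[OF q that] by simp
    then have "\<not> q dvd a * r" using prime_gt_1_nat[OF q]
      by (metis coprime_common_divisor dvd_refl nat_dvd_1_iff_1 less_irrefl)
    then show ?thesis using prime_gt_0_nat[OF q] by (simp add: dvd_eq_mod_eq_0)
  qed
  then have "?h ` {1..<q} \<subseteq> {1..<q}" by blast
  with inj show ?thesis by (simp add: bij_betw_def endo_inj_surj)
qed

lemma dirichlet_char_orthogonality:
  assumes q: "prime q" and chi: "dirichlet_char q chi" and psi: "dirichlet_char q psi"
  shows "(\<Sum>r\<in>{1..<q}. cnj (chi r) * psi r) = (if chi = psi then of_nat (q - 1) else 0)"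
proof (cases "chi = psi")
  case True
  have "cnj (chi r) * chi r = 1" if "r \<in> {1..<q}" for r
    using complex_norm_square[of "chi r"] norm_dirichlet_char_coprime[OF chi prime_coprime_residue[OF q that]]
    by (simp add: mult.commute)
  then show ?thesis using True by simp
next
  case False
  then obtain a0 where "chi a0 \<noteq> psi a0" by blast
  define a where "a = a0 mod q"
  have ne: "chi a \<noteq> psi a"
    using \<open>chi a0 \<noteq> psi a0\<close> by (simp add: a_def dirichlet_char_mod[OF chi] dirichlet_char_mod[OF psi])
  then have a: "coprime a q"
    using dirichlet_char_eq_0_iff[OF chi] dirichlet_char_eq_0_iff[OF psi] by metis
  define u where "u = cnj (chi a) * psi a"
  have "chi a * cnj (chi a) = 1"
    using complex_norm_square[of "chi a"] norm_dirichlet_char_coprime[OF chi a] by simp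
  then have "psi a = chi a * u" by (simp add: u_def mult.assoc[symmetric])
  with ne have "u \<noteq> 1" by auto
  let ?F = "\<lambda>r. cnj (chi r) * psi r"
  \<comment> \<open>The sum is invariant under the substitution \<open>r \<mapsto> a r\<close>, which multiplies it by \<open>u \<noteq> 1\<close>.\<close>
  have "(\<Sum>r\<in>{1..<q}. ?F r) = (\<Sum>r\<in>{1..<q}. ?F (a * r mod q))"
    using sum.reindex_bij_betw[OF bij_betw_mult_mod_prime[OF q a], of ?F] by simp
  also have "\<dots> = (\<Sum>r\<in>{1..<q}. u * ?F r)"
    by (simp add: u_def dirichlet_char_mod[OF chi] dirichlet_char_mod[OF psi]
        dirichlet_char_mult[OF chi] dirichlet_char_mult[OF psi] mult_ac)
  also have "\<dots> = u * (\<Sum>r\<in>{1..<q}. ?F r)" by (simp add: sum_distrib_left)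
  finally have "(1 - u) * (\<Sum>r\<in>{1..<q}. ?F r) = 0" by (simp add: algebra_simps)
  then show ?thesis using \<open>u \<noteq> 1\<close> False by simp
qed

lemma sum_nonprincipal_dirichlet_char:
  assumes q: "prime q" and chi: "dirichlet_char q chi" and "chi \<noteq> principal_char q"
  shows "(\<Sum>r\<in>{1..<q}. chi r) = 0"
proof -
  have "(\<Sum>r\<in>{1..<q}. chi r) = (\<Sum>r\<in>{1..<q}. cnj (principal_char q r) * chi r)"
    using prime_coprime_residue[OF q] by (intro sum.cong) (auto simp: principal_char_def)
  also have "\<dots> = 0"
    using dirichlet_char_orthogonality[OF q dirichlet_char_principal[OF prime_gt_0_nat[OF q]] chi]
      assms(3) by simp
  finally show ?thesis .
qed

section \<open>Bessel's inequality for characters\<close>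

lemma sum_norm_diff_squared:
  fixes D W :: "'a \<Rightarrow> complex"
  shows "of_real (\<Sum>r\<in>R. (norm (D r - W r))\<^sup>2) = (\<Sum>r\<in>R. D r * cnj (D r))
    - (\<Sum>r\<in>R. cnj (D r) * W r) - cnj (\<Sum>r\<in>R. cnj (D r) * W r) + (\<Sum>r\<in>R. W r * cnj (W r))"
proof -
  have "of_real ((norm (D r - W r))\<^sup>2) = D r * cnj (D r) - cnj (D r) * W r
      - cnj (cnj (D r) * W r) + W r * cnj (W r)" for r
    using complex_norm_square[of "D r - W r"] by (simp add: algebra_simps)
  then show ?thesis by (simp add: of_real_sum sum.distrib sum_subtractf)
qed

lemma bessel_inequality:
  fixes S :: "('a \<Rightarrow> complex) set" and R :: "'a set" and D :: "'a \<Rightarrow> complex"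
  assumes "finite S" "finite R" "p > 0"
    and orth: "\<And>chi psi. chi \<in> S \<Longrightarrow> psi \<in> S \<Longrightarrow>
        (\<Sum>r\<in>R. cnj (chi r) * psi r) = (if chi = psi then of_real p else 0)"
  shows "(\<Sum>chi\<in>S. (norm (\<Sum>r\<in>R. chi r * D r))\<^sup>2) \<le> p * (\<Sum>r\<in>R. (norm (D r))\<^sup>2)"
proof -
  define T where "T chi = (\<Sum>r\<in>R. chi r * D r)" for chi
  define t where "t = (\<Sum>chi\<in>S. (norm (T chi))\<^sup>2)"
  \<comment> \<open>\<open>W\<close> is the orthogonal projection of \<open>D\<close> onto the span of \<open>S\<close>; expand \<open>\<parallel>D - W\<parallel>\<^sup>2 \<ge> 0\<close>.\<close>
  define W where "W r = (\<Sum>chi\<in>S. T chi * cnj (chi r)) / of_real p" for r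
  have norm_sq: "z * cnj z = of_real ((norm z)\<^sup>2)" for z :: complex
    by (rule complex_norm_square[symmetric])
  have DW: "(\<Sum>r\<in>R. cnj (D r) * W r) = of_real (t / p)"
  proof -
    have "(\<Sum>r\<in>R. cnj (D r) * W r) = (\<Sum>r\<in>R. \<Sum>chi\<in>S. T chi * cnj (chi r * D r)) / of_real p"
      unfolding W_def by (simp add: sum_distrib_left sum_divide_distrib algebra_simps)
    also have "\<dots> = (\<Sum>chi\<in>S. T chi * cnj (T chi)) / of_real p"
      unfolding T_def by (subst sum.swap) (simp add: sum_distrib_left)
    finally show ?thesis by (simp add: norm_sq t_def)
  qed
  have WW: "(\<Sum>r\<in>R. W r * cnj (W r)) = of_real (t / p)"
  proof -
    have "(\<Sum>r\<in>R. W r * cnj (W r))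
        = (\<Sum>chi\<in>S. \<Sum>psi\<in>S. T chi * cnj (T psi) * (\<Sum>r\<in>R. cnj (chi r) * psi r)) / of_real p ^ 2"
      unfolding W_def
      by (simp add: sum_distrib_left sum_distrib_right sum_divide_distrib power2_eq_square
          algebra_simps sum.swap[of _ R])
    also have "\<dots> = (\<Sum>chi\<in>S. T chi * cnj (T chi)) / of_real p"
      using assms(1,3) by (simp add: orth if_distrib sum.delta power2_eq_square cong: if_cong)
        (simp add: sum_divide_distrib)
    finally show ?thesis by (simp add: norm_sq t_def)
  qed
  have "of_real (\<Sum>r\<in>R. (norm (D r - W r))\<^sup>2) = (\<Sum>r\<in>R. D r * cnj (D r))
      - (\<Sum>r\<in>R. cnj (D r) * W r) - cnj (\<Sum>r\<in>R. cnj (D r) * W r) + (\<Sum>r\<in>R. W r * cnj (W r))"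
    by (rule sum_norm_diff_squared)
  also have "\<dots> = of_real ((\<Sum>r\<in>R. (norm (D r))\<^sup>2) - t / p)"
    unfolding DW WW by (simp add: norm_sq)
  finally have "(\<Sum>r\<in>R. (norm (D r - W r))\<^sup>2) = (\<Sum>r\<in>R. (norm (D r))\<^sup>2) - t / p"
    using of_real_eq_iff by blast
  moreover have "0 \<le> (\<Sum>r\<in>R. (norm (D r - W r))\<^sup>2)" by (simp add: sum_nonneg)
  ultimately have "t / p \<le> (\<Sum>r\<in>R. (norm (D r))\<^sup>2)" by linarith
  then show ?thesis using assms(3) unfolding t_def T_def by (simp add: field_simps)
qed

definition residue_class_sum :: "(nat \<Rightarrow> real) \<Rightarrow> nat set \<Rightarrow> nat \<Rightarrow> nat \<Rightarrow> real" where
  "residue_class_sum g N q r = (\<Sum>n\<in>{n\<in>N. n mod q = r}. g n)"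

lemma dirichlet_char_sum_by_residue_class:
  assumes q: "prime q" and chi: "dirichlet_char q chi" and "finite N"
  shows "(\<Sum>n\<in>N. chi n * of_real (g n)) = (\<Sum>r\<in>{1..<q}. chi r * of_real (residue_class_sum g N q r))"
proof -
  have split: "chi n * of_real (g n)
      = (\<Sum>r\<in>{1..<q}. if n mod q = r then chi r * of_real (g n) else 0)" for n
  proof (cases "n mod q = 0")
    case True
    then have "chi n = 0"
      using dirichlet_char_mod[OF chi, of n] dirichlet_char_eq_0_iff[OF chi, of 0] prime_gt_1_nat[OF q]
      by simp
    then show ?thesis using True by simp
  next
    case False
    then have "n mod q \<in> {1..<q}" using prime_gt_0_nat[OF q] by simp
    then show ?thesis by (simp add: dirichlet_char_mod[OF chi])
  qed
  have "(\<Sum>n\<in>N. chi n * of_real (g n))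
      = (\<Sum>n\<in>N. \<Sum>r\<in>{1..<q}. if n mod q = r then chi r * of_real (g n) else 0)"
    by (rule sum.cong[OF refl split])
  also have "\<dots> = (\<Sum>r\<in>{1..<q}. \<Sum>n\<in>N. if n mod q = r then chi r * of_real (g n) else 0)"
    by (rule sum.swap)
  also have "\<dots> = (\<Sum>r\<in>{1..<q}. chi r * of_real (residue_class_sum g N q r))"
    using assms(3)
    by (simp add: residue_class_sum_def sum.inter_filter[symmetric] sum_distrib_left of_real_sum)
  finally show ?thesis .
qed

lemma nonprincipal_char_sums_le_residue_class_deviation:
  assumes q: "prime q" and "finite S"
    and S: "S \<subseteq> {chi. dirichlet_char q chi \<and> chi \<noteq> principal_char q}" and "finite N"
  shows "(\<Sum>chi\<in>S. (norm (\<Sum>n\<in>N. chi n * of_real (g n)))\<^sup>2)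
       \<le> real (q - 1) * (\<Sum>r\<in>{1..<q}. (residue_class_sum g N q r - m)\<^sup>2)"
proof -
  let ?D = "\<lambda>r. of_real (residue_class_sum g N q r - m) :: complex"
  \<comment> \<open>Subtracting the constant \<open>m\<close> is free since non-principal characters sum to zero.\<close>
  have "(\<Sum>n\<in>N. chi n * of_real (g n)) = (\<Sum>r\<in>{1..<q}. chi r * ?D r)" if "chi \<in> S" for chi
  proof -
    have chi: "dirichlet_char q chi" "chi \<noteq> principal_char q" using that S by auto
    have "(\<Sum>r\<in>{1..<q}. chi r * ?D r)
        = (\<Sum>r\<in>{1..<q}. chi r * of_real (residue_class_sum g N q r)) - of_real m * (\<Sum>r\<in>{1..<q}. chi r)"
      by (simp add: algebra_simps sum_distrib_left sum_subtractf)
    then show ?thesis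
      using sum_nonprincipal_dirichlet_char[OF q chi]
        dirichlet_char_sum_by_residue_class[OF q chi(1) \<open>finite N\<close>] by simp
  qed
  then have "(\<Sum>chi\<in>S. (norm (\<Sum>n\<in>N. chi n * of_real (g n)))\<^sup>2)
      = (\<Sum>chi\<in>S. (norm (\<Sum>r\<in>{1..<q}. chi r * ?D r))\<^sup>2)"
    by simp
  also have "\<dots> \<le> real (q - 1) * (\<Sum>r\<in>{1..<q}. (norm (?D r))\<^sup>2)"
  proof (rule bessel_inequality[OF \<open>finite S\<close> finite_atLeastLessThan])
    show "real (q - 1) > 0" using prime_gt_1_nat[OF q] by simp
    fix chi psi assume "chi \<in> S" "psi \<in> S"
    then have "dirichlet_char q chi" "dirichlet_char q psi" using S by auto
    from dirichlet_char_orthogonality[OF q this] show "(\<Sum>r\<in>{1..<q}. cnj (chi r) * psi r) =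
        (if chi = psi then of_real (real (q - 1)) else 0)"
      by simp
  qed
  finally show ?thesis by (simp only: norm_of_real power2_abs)
qed

section \<open>Residue class sums over intervals\<close>

lemma card_residue_class_atLeastAtMost:
  fixes a b q r :: nat
  assumes "q > 0" "a \<le> b"
  shows "real (card {n\<in>{a..b}. n mod q = r}) \<le> (real b - real a) / real q + 2"
proof -
  let ?C = "{n\<in>{a..b}. n mod q = r}"
  have "inj_on (\<lambda>n. n div q) ?C"
    by (rule inj_onI) (metis (mono_tags, lifting) div_mult_mod_eq mem_Collect_eq)
  moreover have "(\<lambda>n. n div q) ` ?C \<subseteq> {a div q..b div q}" by (auto intro: div_le_mono)
  ultimately have "card ?C \<le> b div q + 1 - a div q"
    using card_inj_on_le[of _ ?C "{a div q..b div q}"] by fastforce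
  moreover have "a div q \<le> b div q" using assms(2) by (rule div_le_mono)
  ultimately have card_le: "real (card ?C) \<le> real (b div q) - real (a div q) + 1" by linarith
  have "real q * real (card ?C) \<le> real q * real (b div q) - real q * real (a div q) + real q"
    using mult_left_mono[OF card_le, of "real q"] by (simp add: algebra_simps)
  moreover have "real q * real (b div q) \<le> real b"
    by (metis of_nat_le_iff of_nat_mult div_times_less_eq_dividend mult.commute)
  moreover have "real a < real q * real (a div q) + real q"
    using mod_less_divisor[OF assms(1), of a] div_mult_mod_eq[of a q]
    by (metis add_less_cancel_left mult.commute of_nat_add of_nat_less_iff of_nat_mult)
  ultimately have "real q * real (card ?C) \<le> real b - real a + 2 * real q" by linarith
  then show ?thesis using assms(1) by (simp add: field_simps)
qed

lemma card_residue_class_window_le_1: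
  fixes q r u :: nat
  shows "card {n\<in>{u..<u + q}. n mod q = r} \<le> 1"
proof -
  have "m = n" if m: "m \<in> {n\<in>{u..<u + q}. n mod q = r}" and n: "n \<in> {n\<in>{u..<u + q}. n mod q = r}"
    for m n
  proof (rule ccontr)
    assume "m \<noteq> n"
    have "q dvd (max m n - min m n)"
      using m n mod_eq_dvd_iff_nat[of m n q] mod_eq_dvd_iff_nat[of n m q] by (auto simp: max_def min_def)
    moreover have "0 < max m n - min m n" "max m n - min m n < q" using m n \<open>m \<noteq> n\<close> by auto
    ultimately show False using nat_dvd_not_less by blast
  qed
  then have "card {n\<in>{u..<u + q}. n mod q = r} \<le> Suc 0"
    using card_le_Suc0_iff_eq[of "{n\<in>{u..<u + q}. n mod q = r}"] by simp
  then show ?thesis by simp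
qed

lemma sum_diff_le_sum_Diff:
  fixes g :: "'a \<Rightarrow> real"
  assumes "finite X" "finite Y" "\<And>y. y \<in> Y - X \<Longrightarrow> 0 \<le> g y"
  shows "sum g X - sum g Y \<le> sum g (X - Y)"
proof -
  have "sum g X = sum g (X \<inter> Y) + sum g (X - Y)" "sum g Y = sum g (X \<inter> Y) + sum g (Y - X)"
    using assms(1,2) sum.Int_Diff by (metis Int_commute)+
  moreover have "0 \<le> sum g (Y - X)" using assms(3) by (rule sum_nonneg)
  ultimately show ?thesis by linarith
qed

lemma sum_le_in_residue_class_window:
  fixes g :: "nat \<Rightarrow> real"
  assumes anti: "antimono_on {a..} g" and "0 \<le> g a"
    and W: "W \<subseteq> {n\<in>{u..<u + q}. n mod q = t}" "W \<subseteq> {a..}"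
  shows "sum g W \<le> g a"
proof -
  have "card W \<le> 1"
    using card_mono[OF _ W(1)] card_residue_class_window_le_1[of u q t] by simp
  moreover have "finite W" using finite_subset[OF W(1)] by simp
  moreover have "g n \<le> g a" if "n \<in> W" for n
    using monotone_onD[OF anti] that W(2) by auto
  ultimately have "sum g W \<le> real (card W) * g a" by (intro sum_bounded_above) auto
  also have "\<dots> \<le> g a"
    using \<open>card W \<le> 1\<close> mult_right_mono[of "real (card W)" 1 "g a"] \<open>0 \<le> g a\<close> by simp
  finally show ?thesis .
qed

lemma residue_class_sum_translate_le:
  fixes g :: "nat \<Rightarrow> real"
  assumes anti: "antimono_on {a..} g" and nonneg: "\<And>n. a \<le> n \<Longrightarrow> 0 \<le> g n" and "d \<le> q"
  shows "residue_class_sum g {a..b} q r - (\<Sum>n\<in>{n\<in>{a..b}. n mod q = r}. g (n + d)) \<le> g a"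
proof -
  define R where "R = {n\<in>{a..b}. n mod q = r}"
  have "finite R" by (simp add: R_def)
  have "sum g R - (\<Sum>n\<in>R. g (n + d)) \<le> sum g R - (\<Sum>n\<in>R. g (n + q))"
    using monotone_onD[OF anti, of "n + d" "n + q" for n] \<open>d \<le> q\<close>
    by (intro diff_left_mono sum_mono) (auto simp: R_def)
  also have "\<dots> = sum g R - sum g ((\<lambda>n. n + q) ` R)" by (simp add: sum.reindex)
  also have "\<dots> \<le> sum g (R - (\<lambda>n. n + q) ` R)"
    using \<open>finite R\<close> nonneg by (intro sum_diff_le_sum_Diff) (auto simp: R_def)
  also have "\<dots> \<le> g a"
  proof (rule sum_le_in_residue_class_window[OF anti nonneg[OF order_refl]])
    show "R - (\<lambda>n. n + q) ` R \<subseteq> {n\<in>{a..<a + q}. n mod q = r}"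
    proof
      fix n assume n: "n \<in> R - (\<lambda>n. n + q) ` R"
      have "n < a + q"
      proof (rule ccontr)
        assume "\<not> n < a + q"
        then have "n - q \<in> R" "n = n - q + q" using n by (auto simp: R_def mod_if)
        then show False using n by blast
      qed
      then show "n \<in> {n\<in>{a..<a + q}. n mod q = r}" using n by (simp add: R_def)
    qed
    show "R - (\<lambda>n. n + q) ` R \<subseteq> {a..}" by (auto simp: R_def)
  qed
  finally show ?thesis by (simp add: residue_class_sum_def R_def)
qed

lemma translate_le_residue_class_sum:
  fixes g :: "nat \<Rightarrow> real"
  assumes anti: "antimono_on {a..} g" and nonneg: "\<And>n. a \<le> n \<Longrightarrow> 0 \<le> g n" and "d < q"
    and shift: "\<And>n. n mod q = r \<Longrightarrow> (n + d) mod q = s"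
  shows "(\<Sum>n\<in>{n\<in>{a..b}. n mod q = r}. g (n + d)) - residue_class_sum g {a..b} q s \<le> g a"
proof -
  define R where "R = {n\<in>{a..b}. n mod q = r}"
  define S where "S = {n\<in>{a..b}. n mod q = s}"
  have "finite R" "finite S" by (simp_all add: R_def S_def)
  have "(\<Sum>n\<in>R. g (n + d)) - sum g S = sum g ((\<lambda>n. n + d) ` R) - sum g S"
    by (simp add: sum.reindex)
  also have "\<dots> \<le> sum g ((\<lambda>n. n + d) ` R - S)"
    using \<open>finite R\<close> \<open>finite S\<close> nonneg by (intro sum_diff_le_sum_Diff) (auto simp: S_def)
  also have "\<dots> \<le> g a"
  proof (rule sum_le_in_residue_class_window[OF anti nonneg[OF order_refl]])
    show "(\<lambda>n. n + d) ` R - S \<subseteq> {n\<in>{Suc b..<Suc b + q}. n mod q = s}"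
      using \<open>d < q\<close> shift by (auto simp: R_def S_def)
    show "(\<lambda>n. n + d) ` R - S \<subseteq> {a..}" by (auto simp: R_def)
  qed
  finally show ?thesis by (simp add: residue_class_sum_def R_def S_def)
qed

lemma antitone_residue_class_sum_diff_le:
  fixes g :: "nat \<Rightarrow> real"
  assumes "r < q" "s < q"
    and anti: "antimono_on {a..} g" and nonneg: "\<And>n. a \<le> n \<Longrightarrow> 0 \<le> g n"
  shows "residue_class_sum g {a..b} q r - residue_class_sum g {a..b} q s \<le> 2 * g a"
proof -
  \<comment> \<open>Translating the class of \<open>r\<close> by \<open>d\<close> lands in the class of \<open>s\<close>; each comparison costs one term.\<close>
  define d where "d = (s + q - r) mod q"
  have "d < q" using assms(1) by (simp add: d_def)
  have shift: "(n + d) mod q = s" if "n mod q = r" for n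
  proof -
    have "(n + d) mod q = (n mod q + (s + q - r)) mod q"
      unfolding d_def by (simp add: mod_add_left_eq mod_add_right_eq)
    also have "\<dots> = (s + q) mod q" using that assms(1) by simp
    finally show ?thesis using assms(2) by simp
  qed
  have "residue_class_sum g {a..b} q r - (\<Sum>n\<in>{n\<in>{a..b}. n mod q = r}. g (n + d)) \<le> g a"
    by (rule residue_class_sum_translate_le[OF anti]) (use nonneg \<open>d < q\<close> in auto)
  moreover have "(\<Sum>n\<in>{n\<in>{a..b}. n mod q = r}. g (n + d)) - residue_class_sum g {a..b} q s \<le> g a"
    by (rule translate_le_residue_class_sum[OF anti]) (use nonneg \<open>d < q\<close> shift in auto)
  ultimately show ?thesis by linarith
qed

lemma abs_antitone_residue_class_sum_diff_le:
  fixes g :: "nat \<Rightarrow> real"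
  assumes "r < q" "s < q" "antimono_on {a..} g" "\<And>n. a \<le> n \<Longrightarrow> 0 \<le> g n"
  shows "\<bar>residue_class_sum g {a..b} q r - residue_class_sum g {a..b} q s\<bar> \<le> 2 * g a"
  using antitone_residue_class_sum_diff_le[OF assms(1,2,3,4), of b]
    antitone_residue_class_sum_diff_le[OF assms(2,1,3,4), of b] by linarith

lemma sum_residue_class_sums_le:
  fixes h :: "nat \<Rightarrow> real"
  assumes "finite N" "\<And>n. n \<in> N \<Longrightarrow> 0 \<le> h n"
  shows "(\<Sum>r\<in>{1..<q}. residue_class_sum h N q r) \<le> sum h N"
proof -
  have "(\<Sum>r\<in>{1..<q}. residue_class_sum h N q r) = (\<Sum>r\<in>{1..<q}. \<Sum>n\<in>N. if n mod q = r then h n else 0)"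
    using assms(1) by (simp add: residue_class_sum_def sum.inter_filter)
  also have "\<dots> = (\<Sum>n\<in>N. \<Sum>r\<in>{1..<q}. if n mod q = r then h n else 0)"
    by (rule sum.swap)
  also have "\<dots> \<le> sum h N"
    using assms(2) by (intro sum_mono) (auto simp: sum.delta)
  finally show ?thesis .
qed

lemma abs_residue_class_sum_le:
  assumes "\<And>n. n \<in> N \<Longrightarrow> \<bar>g n\<bar> \<le> G"
  shows "\<bar>residue_class_sum g N q r\<bar> \<le> real (card {n\<in>N. n mod q = r}) * G"
  unfolding residue_class_sum_def using assms
  by (intro sum_abs[THEN order_trans] sum_bounded_above) auto

lemma sum_squared_residue_class_sums_le:
  fixes g :: "nat \<Rightarrow> real"
  assumes "finite N" "\<And>r. \<bar>residue_class_sum g N q r\<bar> \<le> M" "\<And>n. n \<in> N \<Longrightarrow> \<bar>g n\<bar> \<le> G"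
  shows "(\<Sum>r\<in>{1..<q}. (residue_class_sum g N q r)\<^sup>2) \<le> M * (real (card N) * G)"
proof -
  let ?A = "residue_class_sum (\<lambda>n. \<bar>g n\<bar>) N q"
  have "\<bar>residue_class_sum g N q r\<bar> \<le> ?A r" for r
    unfolding residue_class_sum_def by (rule sum_abs)
  have "0 \<le> M" using assms(2)[of 0] abs_ge_zero[of "residue_class_sum g N q 0"] by linarith
  have "(residue_class_sum g N q r)\<^sup>2 \<le> M * ?A r" for r
  proof -
    have "\<bar>residue_class_sum g N q r\<bar> * \<bar>residue_class_sum g N q r\<bar> \<le> M * ?A r"
      using assms(2)[of r] \<open>\<bar>residue_class_sum g N q r\<bar> \<le> ?A r\<close> by (intro mult_mono) auto
    then show ?thesis by (simp add: power2_eq_square)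
  qed
  then have "(\<Sum>r\<in>{1..<q}. (residue_class_sum g N q r)\<^sup>2) \<le> M * (\<Sum>r\<in>{1..<q}. ?A r)"
    by (simp add: sum_distrib_left sum_mono)
  also have "\<dots> \<le> M * (\<Sum>n\<in>N. \<bar>g n\<bar>)"
    using assms(1) \<open>0 \<le> M\<close> by (intro mult_left_mono sum_residue_class_sums_le) auto
  also have "\<dots> \<le> M * (real (card N) * G)"
    using assms(3) \<open>0 \<le> M\<close> by (intro mult_left_mono sum_bounded_above) auto
  finally show ?thesis .
qed

lemma antimono_on_inverse_powr:
  assumes "0 \<le> e"
  shows "antimono_on {1..} (\<lambda>n::nat. 1 / real n powr e)"
  using assms by (intro monotone_onI) (auto intro!: divide_left_mono powr_mono2 mult_pos_pos)

lemma inverse_powr_two_thirds_le_half: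
  "1 \<le> n \<Longrightarrow> 1 / real n powr (2/3) \<le> 1 / real n powr (1/2)"
  by (intro divide_left_mono powr_mono) auto

lemma inverse_powr_half_squared:
  assumes "1 \<le> a"
  shows "(1 / real a powr (1/2))\<^sup>2 = 1 / real a"
proof -
  have "(real a powr (1/2))\<^sup>2 = real a" using assms by (simp add: powr_half_sqrt)
  then show ?thesis by (metis power_divide power_one)
qed

definition fw_coeff_bound :: real where
  "fw_coeff_bound = \<bar>rzeta (3/2)\<bar> + \<bar>rzeta (2/3)\<bar>"

lemma fw_coeff_bound_nonneg: "0 \<le> fw_coeff_bound"
  by (simp add: fw_coeff_bound_def)

lemma fw_of_nat:
  "fw (real n) = rzeta (3/2) / 2 * (1 / real n powr (1/2)) + rzeta (2/3) / 3 * (1 / real n powr (2/3))"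
  by (simp add: fw_def)

lemma fw_coeffs_combination_le:
  assumes "0 \<le> u" "u \<le> w" "0 \<le> v" "v \<le> w"
  shows "\<bar>rzeta (3/2) / 2\<bar> * u + \<bar>rzeta (2/3) / 3\<bar> * v \<le> fw_coeff_bound * w"
proof -
  have "\<bar>rzeta (3/2) / 2\<bar> * u + \<bar>rzeta (2/3) / 3\<bar> * v \<le> \<bar>rzeta (3/2)\<bar> * w + \<bar>rzeta (2/3)\<bar> * w"
    using assms by (intro add_mono mult_mono) auto
  then show ?thesis by (simp add: fw_coeff_bound_def algebra_simps)
qed

lemma abs_fw_le:
  assumes "1 \<le> a" "a \<le> n"
  shows "\<bar>fw (real n)\<bar> \<le> fw_coeff_bound * (1 / real a powr (1/2))"
proof -
  have half: "1 / real n powr (1/2) \<le> 1 / real a powr (1/2)"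
    using monotone_onD[OF antimono_on_inverse_powr, of "1/2" a n] assms by simp
  have "\<bar>fw (real n)\<bar> \<le> \<bar>rzeta (3/2) / 2\<bar> * (1 / real n powr (1/2)) + \<bar>rzeta (2/3) / 3\<bar> * (1 / real n powr (2/3))"
    unfolding fw_of_nat by (rule abs_triangle_ineq[THEN order_trans]) (simp add: abs_mult)
  also have "\<dots> \<le> fw_coeff_bound * (1 / real a powr (1/2))"
    using half inverse_powr_two_thirds_le_half[of n] assms
    by (intro fw_coeffs_combination_le) auto
  finally show ?thesis .
qed

lemma fw_residue_class_sum_diff_le:
  assumes "1 \<le> a" "r < q" "s < q"
  shows "\<bar>residue_class_sum (\<lambda>n. fw (real n)) {a..b} q r - residue_class_sum (\<lambda>n. fw (real n)) {a..b} q s\<bar>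
    \<le> 2 * fw_coeff_bound * (1 / real a powr (1/2))"
proof -
  define g where "g e = (\<lambda>n::nat. 1 / real n powr e)" for e
  define D where "D e = residue_class_sum (g e) {a..b} q r - residue_class_sum (g e) {a..b} q s" for e
  have D: "\<bar>D e\<bar> \<le> 2 * g e a" if "0 \<le> e" for e
  proof -
    have "antimono_on {a..} (g e)"
      using monotone_on_subset[OF antimono_on_inverse_powr[OF that]] assms(1) by (auto simp: g_def)
    then show ?thesis unfolding D_def using assms by (intro abs_antitone_residue_class_sum_diff_le) (auto simp: g_def)
  qed
  have "residue_class_sum (\<lambda>n. fw (real n)) {a..b} q r - residue_class_sum (\<lambda>n. fw (real n)) {a..b} q s
      = rzeta (3/2) / 2 * D (1/2) + rzeta (2/3) / 3 * D (2/3)"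
    by (simp add: D_def g_def residue_class_sum_def fw_of_nat sum.distrib sum_distrib_left algebra_simps)
  also have "\<bar>\<dots>\<bar> \<le> \<bar>rzeta (3/2) / 2\<bar> * (2 * g (1/2) a) + \<bar>rzeta (2/3) / 3\<bar> * (2 * g (2/3) a)"
  proof -
    have "\<bar>c * D e\<bar> \<le> \<bar>c\<bar> * (2 * g e a)" if "0 \<le> e" for c e
      unfolding abs_mult using D[OF that] by (rule mult_left_mono) simp
    from this[of "1/2" "rzeta (3/2) / 2"] this[of "2/3" "rzeta (2/3) / 3"] show ?thesis
      using abs_triangle_ineq[of "rzeta (3/2) / 2 * D (1/2)" "rzeta (2/3) / 3 * D (2/3)"] by simp
  qed
  also have "\<dots> \<le> fw_coeff_bound * (2 * g (1/2) a)"
    using inverse_powr_two_thirds_le_half[OF assms(1)] by (intro fw_coeffs_combination_le) (auto simp: g_def)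
  finally show ?thesis by (simp add: g_def mult_ac)
qed

lemma residue_class_sums_close:
  assumes "1 \<le> a" "0 < x" "x \<le> real a * K" "real q * K \<le> x"
  shows "(\<Sum>r\<in>{1..<q}. (residue_class_sum (\<lambda>n. fw (real n)) {a..b} q r
    - residue_class_sum (\<lambda>n. fw (real n)) {a..b} q 1)\<^sup>2) \<le> 4 * fw_coeff_bound\<^sup>2"
proof -
  have "0 < real a * K" using assms(2,3) by linarith
  then have K: "0 < K" using assms(1) by (simp add: zero_less_mult_iff)
  have "(\<Sum>r\<in>{1..<q}. (residue_class_sum (\<lambda>n. fw (real n)) {a..b} q r
      - residue_class_sum (\<lambda>n. fw (real n)) {a..b} q 1)\<^sup>2)
      \<le> (\<Sum>r\<in>{1..<q}. (2 * fw_coeff_bound * (1 / real a powr (1/2)))\<^sup>2)"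
    using fw_residue_class_sum_diff_le[OF assms(1)] fw_coeff_bound_nonneg
    by (intro sum_mono, subst abs_le_square_iff[symmetric]) auto
  also have "\<dots> = real (q - 1) * (4 * fw_coeff_bound\<^sup>2 / real a)"
    unfolding power_mult_distrib inverse_powr_half_squared[OF assms(1)] by simp
  also have "\<dots> \<le> real q * K / x * (4 * fw_coeff_bound\<^sup>2)"
  proof -
    have "real (q - 1) * x \<le> real q * (K * real a)"
      using assms by (intro mult_mono) (auto simp: mult.commute)
    then have "real (q - 1) / real a \<le> real q * K / x"
      using assms(1,2) by (simp add: divide_simps mult_ac)
    from mult_right_mono[OF this, of "4 * fw_coeff_bound\<^sup>2"] show ?thesis by simp
  qed
  also have "\<dots> \<le> 4 * fw_coeff_bound\<^sup>2"
    using assms(2,4) K by (intro mult_left_le_one_le) auto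
  finally show ?thesis .
qed

lemma residue_class_sums_small:
  assumes "1 \<le> a" "a \<le> b" "0 < x" "x \<le> real a * K" "real b * K \<le> 3 * x" "K \<le> 2 * x"
    "x < real q * K"
  shows "(\<Sum>r\<in>{1..<q}. (residue_class_sum (\<lambda>n. fw (real n)) {a..b} q r)\<^sup>2) \<le> 16 * fw_coeff_bound\<^sup>2"
proof -
  define G where "G = fw_coeff_bound * (1 / real a powr (1/2))"
  have "0 < real a * K" using assms(3,4) by linarith
  then have K: "0 < K" using assms(1) by (simp add: zero_less_mult_iff)
  have "q > 0" using assms(3,7) by (cases q) auto
  have "0 \<le> G" by (simp add: G_def fw_coeff_bound_nonneg)
  have fw_le_G: "\<bar>fw (real n)\<bar> \<le> G" if "n \<in> {a..b}" for n
    using abs_fw_le[OF assms(1)] that by (simp add: G_def)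
  have "G\<^sup>2 = fw_coeff_bound\<^sup>2 / real a"
    unfolding G_def power_mult_distrib inverse_powr_half_squared[OF assms(1)] by simp
  also have "\<dots> \<le> fw_coeff_bound\<^sup>2 * (K / x)"
    using assms(1,3,4) K mult_right_mono[of x "K * real a" "fw_coeff_bound\<^sup>2"]
    by (simp add: divide_simps mult_ac)
  finally have G2: "G\<^sup>2 \<le> fw_coeff_bound\<^sup>2 * (K / x)" .
  have span: "(real b - real a) * K \<le> 2 * x" using assms(4,5) by (simp add: algebra_simps)
  \<comment> \<open>Since \<open>q K > x\<close>, the interval is shorter than \<open>2 q\<close>, so every class has at most four terms.\<close>
  have "(real b - real a) * K \<le> (2 * real q) * K" using span assms(7) by linarith
  then have "real b - real a \<le> 2 * real q" using K by (rule mult_right_le_imp_le)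
  then have "(real b - real a) / real q \<le> 2" using \<open>q > 0\<close> by (simp add: pos_divide_le_eq)
  then have card_G: "real (card {n\<in>{a..b}. n mod q = r}) * G \<le> 4 * G" for r
    using card_residue_class_atLeastAtMost[OF \<open>q > 0\<close> assms(2), of r] \<open>0 \<le> G\<close>
    by (intro mult_right_mono) linarith+
  have "\<bar>residue_class_sum (\<lambda>n. fw (real n)) {a..b} q r\<bar> \<le> 4 * G" for r
    using abs_residue_class_sum_le[OF fw_le_G, where q = q and r = r] card_G[of r] by (rule order_trans)
  then have "(\<Sum>r\<in>{1..<q}. (residue_class_sum (\<lambda>n. fw (real n)) {a..b} q r)\<^sup>2)
      \<le> 4 * G * (real (card {a..b}) * G)"
    using fw_le_G by (intro sum_squared_residue_class_sums_le) auto
  also have "\<dots> = 4 * G\<^sup>2 * (1 + real b - real a)" using assms(2) by (simp add: power2_eq_square of_nat_diff)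
  also have "\<dots> \<le> 4 * (fw_coeff_bound\<^sup>2 * (K / x)) * (2 * x / K + 1)"
    using G2 span assms(2,3) K by (intro mult_mono) (auto simp: field_simps)
  also have "\<dots> = 4 * fw_coeff_bound\<^sup>2 * (2 + K / x)" using K assms(3) by (simp add: field_simps)
  also have "\<dots> \<le> 4 * fw_coeff_bound\<^sup>2 * 4" using assms(3,6) by (intro mult_left_mono) (auto simp: pos_divide_le_eq)
  finally show ?thesis by simp
qed

section \<open>Character sums over a dilated interval\<close>

lemma finite_nat_dilation_preimage:
  fixes I :: "real set" and K y :: real
  assumes "1 \<le> K" "I \<subseteq> {..y}"
  shows "finite {n. 1 \<le> n \<and> real n * K \<in> I}"
proof (rule finite_subset)
  show "{n. 1 \<le> n \<and> real n * K \<in> I} \<subseteq> {..nat \<lceil>y\<rceil>}"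
  proof
    fix n assume n: "n \<in> {n. 1 \<le> n \<and> real n * K \<in> I}"
    have "real n * 1 \<le> real n * K" using assms(1) by (intro mult_left_mono) auto
    also have "\<dots> \<le> y" using n assms(2) by auto
    finally have "real n \<le> y" by simp
    then show "n \<in> {..nat \<lceil>y\<rceil>}" by (simp add: nat_le_iff) linarith
  qed
qed simp

lemma nat_dilation_preimage_atLeastAtMost:
  fixes I :: "real set" and K :: real
  assumes "is_interval I" "0 \<le> K" "finite {n. 1 \<le> n \<and> real n * K \<in> I}"
  obtains a b where "1 \<le> a" "{n. 1 \<le> n \<and> real n * K \<in> I} = {a..b}"
proof (cases "{n. 1 \<le> n \<and> real n * K \<in> I} = {}")
  case True
  then show ?thesis using that[of 1 0] by simp
next
  case False
  let ?N = "{n. 1 \<le> n \<and> real n * K \<in> I}"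
  have Min: "Min ?N \<in> ?N" and Max: "Max ?N \<in> ?N"
    using Min_in[OF assms(3) False] Max_in[OF assms(3) False] by simp_all
  have "?N = {Min ?N..Max ?N}"
  proof
    show "?N \<subseteq> {Min ?N..Max ?N}" using assms(3) by auto
    show "{Min ?N..Max ?N} \<subseteq> ?N"
    proof
      fix n assume n: "n \<in> {Min ?N..Max ?N}"
      have "real (Min ?N) * K \<le> real n * K \<and> real n * K \<le> real (Max ?N) * K"
        using n assms(2) by (auto intro: mult_right_mono)
      then have "real n * K \<in> I"
        using Min Max is_interval_1[THEN iffD1, OF assms(1), rule_format] by (simp only: mem_Collect_eq) blast
      moreover have "1 \<le> n" using n Min by auto
      ultimately show "n \<in> ?N" by simp
    qed
  qed
  moreover have "1 \<le> Min ?N" using Min by simp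
  ultimately show ?thesis using that by blast
qed

lemma residue_class_deviation_le:
  assumes "1 \<le> a" "a \<le> b" "0 < x" "x \<le> real a * K" "real b * K \<le> 3 * x" "K \<le> 2 * x"
  shows "\<exists>m. (\<Sum>r\<in>{1..<q}. (residue_class_sum (\<lambda>n. fw (real n)) {a..b} q r - m)\<^sup>2)
    \<le> 16 * fw_coeff_bound\<^sup>2"
proof (cases "real q * K \<le> x")
  case True
  have "(\<Sum>r\<in>{1..<q}. (residue_class_sum (\<lambda>n. fw (real n)) {a..b} q r
      - residue_class_sum (\<lambda>n. fw (real n)) {a..b} q 1)\<^sup>2) \<le> 16 * fw_coeff_bound\<^sup>2"
    using residue_class_sums_close[OF assms(1,3,4) True] by (rule order_trans) simp
  then show ?thesis by blast
next
  case False
  then show ?thesis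
    using residue_class_sums_small[OF assms] by (intro exI[of _ 0]) simp
qed

lemma nonprincipal_char_sums_fw_le:
  assumes q: "prime q" and "finite S" and S: "S \<subseteq> {chi. dirichlet_char q chi \<and> chi \<noteq> principal_char q}"
    and "0 < x" "1 \<le> K" "K \<le> 2 * x" and I: "is_interval I" "I \<subseteq> {x..3 * x}"
  shows "(\<Sum>chi\<in>S. (norm (\<Sum>n\<in>{n. 1 \<le> n \<and> real n * K \<in> I}. chi n * of_real (fw (real n))))\<^sup>2)
    \<le> real (q - 1) * (16 * fw_coeff_bound\<^sup>2)"
proof -
  let ?N = "{n. 1 \<le> n \<and> real n * K \<in> I}"
  have "I \<subseteq> {..3 * x}" using I(2) by auto
  then have "finite ?N" by (rule finite_nat_dilation_preimage[OF \<open>1 \<le> K\<close>])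
  moreover have "0 \<le> K" using \<open>1 \<le> K\<close> by simp
  ultimately obtain a b where "1 \<le> a" and N: "?N = {a..b}"
    using nat_dilation_preimage_atLeastAtMost[OF I(1)] by blast
  show ?thesis
  proof (cases "a \<le> b")
    case False
    with N have "?N = {}" by simp
    then show ?thesis by (simp only: sum.empty) simp
  next
    case True
    then have "a \<in> ?N" "b \<in> ?N" unfolding N by simp_all
    then have ab: "x \<le> real a * K" "real b * K \<le> 3 * x" using I(2) by auto
    obtain m where m: "(\<Sum>r\<in>{1..<q}. (residue_class_sum (\<lambda>n. fw (real n)) {a..b} q r - m)\<^sup>2)
        \<le> 16 * fw_coeff_bound\<^sup>2"
      using residue_class_deviation_le[OF \<open>1 \<le> a\<close> True \<open>0 < x\<close> ab \<open>K \<le> 2 * x\<close>] by blast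
    have "(\<Sum>chi\<in>S. (norm (\<Sum>n\<in>?N. chi n * of_real (fw (real n))))\<^sup>2)
        \<le> real (q - 1) * (\<Sum>r\<in>{1..<q}. (residue_class_sum (\<lambda>n. fw (real n)) {a..b} q r - m)\<^sup>2)"
      using nonprincipal_char_sums_le_residue_class_deviation[OF q \<open>finite S\<close> S \<open>finite ?N\<close>,
          where g = "\<lambda>n. fw (real n)" and m = m] N
      by simp
    also have "\<dots> \<le> real (q - 1) * (16 * fw_coeff_bound\<^sup>2)" using m by (rule mult_left_mono) simp
    finally show ?thesis .
  qed
qed

lemma abs_moebius_mu_le_1: "\<bar>moebius_mu c\<bar> \<le> 1"
  by (simp add: moebius_mu_def power_abs)

lemma norm_moebius_mu_dirichlet_char_power_le_1:
  assumes "dirichlet_char q chi"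
  shows "norm (of_int (moebius_mu c) * chi c ^ k) \<le> 1"
proof -
  have "norm (of_int (moebius_mu c) * chi c ^ k) = \<bar>real_of_int (moebius_mu c)\<bar> * norm (chi c) ^ k"
    by (simp add: norm_mult norm_power)
  also have "\<dots> \<le> 1 * 1"
    using abs_moebius_mu_le_1[of c] norm_dirichlet_char_le_1[OF assms, of c]
    by (intro mult_mono power_le_one) (simp_all flip: of_int_abs)
  finally show ?thesis by simp
qed

lemma norm_sum_weighted_squared_le:
  fixes w T :: "'a \<Rightarrow> complex"
  assumes "\<And>i. i \<in> A \<Longrightarrow> norm (w i) \<le> 1"
  shows "(norm (\<Sum>i\<in>A. w i * T i))\<^sup>2 \<le> real (card A) * (\<Sum>i\<in>A. (norm (T i))\<^sup>2)"
proof -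
  have "norm (\<Sum>i\<in>A. w i * T i) \<le> (\<Sum>i\<in>A. norm (T i))"
    using assms by (intro norm_sum[THEN order_trans] sum_mono)
      (auto simp: norm_mult intro: mult_left_le_one_le)
  then have "(norm (\<Sum>i\<in>A. w i * T i))\<^sup>2 \<le> (\<Sum>i\<in>A. norm (T i))\<^sup>2"
    by (intro power_mono) auto
  also have "\<dots> \<le> real (card A) * (\<Sum>i\<in>A. (norm (T i))\<^sup>2)"
    using Cauchy_Schwarz_ineq_sum[of "\<lambda>i. 1" "\<lambda>i. norm (T i)" A] by simp
  finally show ?thesis .
qed

lemma sum_norm_weighted_sums_squared_le:
  fixes w T :: "'a \<Rightarrow> 'b \<Rightarrow> complex"
  assumes "\<And>s c. s \<in> S \<Longrightarrow> norm (w s c) \<le> 1" "\<And>c. c \<in> C \<Longrightarrow> (\<Sum>s\<in>S. (norm (T s c))\<^sup>2) \<le> B"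
  shows "(\<Sum>s\<in>S. (norm (\<Sum>c\<in>C. w s c * T s c))\<^sup>2) \<le> real (card C) ^ 2 * B"
proof -
  have "(\<Sum>s\<in>S. (norm (\<Sum>c\<in>C. w s c * T s c))\<^sup>2) \<le> (\<Sum>s\<in>S. real (card C) * (\<Sum>c\<in>C. (norm (T s c))\<^sup>2))"
    using assms(1) by (intro sum_mono norm_sum_weighted_squared_le) auto
  also have "\<dots> = real (card C) * (\<Sum>c\<in>C. \<Sum>s\<in>S. (norm (T s c))\<^sup>2)"
    by (simp add: sum_distrib_left sum.swap[of _ S])
  also have "\<dots> \<le> real (card C) * (\<Sum>c\<in>C. B)" using assms(2) by (intro mult_left_mono sum_mono) auto
  also have "\<dots> = real (card C) ^ 2 * B" by (simp add: power2_eq_square)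
  finally show ?thesis .
qed

lemma sixth_powers_subset:
  fixes z :: real
  assumes "0 < z"
  shows "{c::nat. 1 \<le> c \<and> real (c ^ 6) \<le> z} \<subseteq> {1..nat \<lfloor>z powr (1/6)\<rfloor>}"
proof
  fix c :: nat assume c: "c \<in> {c. 1 \<le> c \<and> real (c ^ 6) \<le> z}"
  have "(z powr (1/6)) ^ 6 = z" using assms by (simp add: powr_realpow[symmetric] powr_powr)
  with c have "real c ^ 6 \<le> (z powr (1/6)) ^ 6" by simp
  then have "real c \<le> z powr (1/6)" using power_mono_iff[of "real c" "z powr (1/6)" 6] by simp
  then show "c \<in> {1..nat \<lfloor>z powr (1/6)\<rfloor>}" using c by (simp add: le_nat_floor)
qed

lemma card_sixth_powers_squared_le:
  fixes z :: real
  assumes "0 < z"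
  shows "real (card {c::nat. 1 \<le> c \<and> real (c ^ 6) \<le> z}) ^ 2 \<le> z powr (1/3)"
proof -
  have "card {c::nat. 1 \<le> c \<and> real (c ^ 6) \<le> z} \<le> nat \<lfloor>z powr (1/6)\<rfloor>"
    using card_mono[OF _ sixth_powers_subset[OF assms]] by simp
  then have "real (card {c::nat. 1 \<le> c \<and> real (c ^ 6) \<le> z}) \<le> real (nat \<lfloor>z powr (1/6)\<rfloor>)"
    by (simp only: of_nat_le_iff)
  also have "\<dots> \<le> z powr (1/6)" by (simp add: of_nat_floor)
  finally have "real (card {c::nat. 1 \<le> c \<and> real (c ^ 6) \<le> z}) ^ 2 \<le> (z powr (1/6)) ^ 2"
    by (intro power_mono) auto
  also have "\<dots> = z powr (1/3)" using assms by (simp add: powr_realpow[symmetric] powr_powr)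
  finally show ?thesis .
qed

lemma sum_swapped_Sigma:
  assumes "finite A" "\<And>c. c \<in> A \<Longrightarrow> finite (B c)"
  shows "(\<Sum>(n, c)\<in>{(n, c). c \<in> A \<and> n \<in> B c}. f n c) = (\<Sum>c\<in>A. \<Sum>n\<in>B c. f n c)"
proof -
  have "{(n, c). c \<in> A \<and> n \<in> B c} = (\<lambda>(c, n). (n, c)) ` Sigma A B" by auto
  moreover have "inj_on (\<lambda>(c, n). (n, c)) (Sigma A B)" by (auto simp: inj_on_def)
  ultimately have "(\<Sum>(n, c)\<in>{(n, c). c \<in> A \<and> n \<in> B c}. f n c) = (\<Sum>(c, n)\<in>Sigma A B. f n c)"
    by (simp add: sum.reindex case_prod_unfold comp_def)
  also have "\<dots> = (\<Sum>c\<in>A. \<Sum>n\<in>B c. f n c)" using assms by (subst sum.Sigma) auto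
  finally show ?thesis .
qed

lemma nonprincipal_mean_square_le:
  fixes x z :: real and q :: nat and I :: "real set"
  assumes "0 < x" and q: "prime q" and "0 < z" "z \<le> 2 * x" and I: "is_interval I" "I \<subseteq> {x..3 * x}"
  shows "(1 / real (totient q)) *
       (\<Sum>chi \<in> {chi. dirichlet_char q chi \<and> chi \<noteq> principal_char q}.
          (cmod (\<Sum>(n, c) \<in> {(n, c). n \<ge> 1 \<and> c \<ge> 1 \<and> real (c ^ 6) \<le> z \<and>
                                        real (n * c ^ 6) \<in> I}.
                   of_int (moebius_mu c) * chi n * chi c ^ 6 * complex_of_real (fw (real n))))\<^sup>2)
     \<le> 16 * fw_coeff_bound\<^sup>2 * z powr (1/3)"
proof -
  define S where "S = {chi. dirichlet_char q chi \<and> chi \<noteq> principal_char q}"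
  define Cs where "Cs = {c::nat. 1 \<le> c \<and> real (c ^ 6) \<le> z}"
  define N where "N c = {n::nat. 1 \<le> n \<and> real n * real (c ^ 6) \<in> I}" for c
  define T where "T chi c = (\<Sum>n\<in>N c. chi n * of_real (fw (real n)))" for chi :: "nat \<Rightarrow> complex" and c
  have "finite Cs"
    unfolding Cs_def using sixth_powers_subset[OF \<open>0 < z\<close>] by (rule finite_subset) simp
  have "I \<subseteq> {..3 * x}" using I(2) by auto
  then have "finite (N c)" if "c \<in> Cs" for c
    using finite_nat_dilation_preimage[of "real (c ^ 6)" I "3 * x"] that by (simp add: N_def Cs_def)
  have "{(n, c). n \<ge> 1 \<and> c \<ge> 1 \<and> real (c ^ 6) \<le> z \<and> real (n * c ^ 6) \<in> I}
      = {(n, c). c \<in> Cs \<and> n \<in> N c}"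
    by (auto simp: Cs_def N_def)
  then have split: "(\<Sum>(n, c) \<in> {(n, c). n \<ge> 1 \<and> c \<ge> 1 \<and> real (c ^ 6) \<le> z \<and> real (n * c ^ 6) \<in> I}.
        of_int (moebius_mu c) * chi n * chi c ^ 6 * of_real (fw (real n)))
      = (\<Sum>c\<in>Cs. (of_int (moebius_mu c) * chi c ^ 6) * T chi c)" for chi
    using sum_swapped_Sigma[OF \<open>finite Cs\<close> \<open>\<And>c. c \<in> Cs \<Longrightarrow> finite (N c)\<close>]
    by (simp add: T_def sum_distrib_left mult_ac)
  show ?thesis
  proof (cases "finite S")
    case False
    then show ?thesis using fw_coeff_bound_nonneg by (simp add: S_def[symmetric])
  next
    case True
    have "(\<Sum>chi\<in>S. (norm (\<Sum>c\<in>Cs. (of_int (moebius_mu c) * chi c ^ 6) * T chi c))\<^sup>2)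
        \<le> real (card Cs) ^ 2 * (real (q - 1) * (16 * fw_coeff_bound\<^sup>2))"
    proof (rule sum_norm_weighted_sums_squared_le)
      show "norm (of_int (moebius_mu c) * chi c ^ 6) \<le> 1" if "chi \<in> S" for chi c
        using that norm_moebius_mu_dirichlet_char_power_le_1 by (auto simp: S_def)
      show "(\<Sum>chi\<in>S. (norm (T chi c))\<^sup>2) \<le> real (q - 1) * (16 * fw_coeff_bound\<^sup>2)" if "c \<in> Cs" for c
        unfolding T_def N_def using assms True that
        by (intro nonprincipal_char_sums_fw_le) (auto simp: S_def Cs_def)
    qed
    also have "\<dots> \<le> real (q - 1) * (16 * fw_coeff_bound\<^sup>2 * z powr (1/3))"
      using mult_right_mono[OF card_sixth_powers_squared_le[OF \<open>0 < z\<close>],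
          of "real (q - 1) * (16 * fw_coeff_bound\<^sup>2)"]
      by (simp add: Cs_def mult_ac)
    finally have bound: "(\<Sum>chi\<in>S. (norm (\<Sum>c\<in>Cs. (of_int (moebius_mu c) * chi c ^ 6) * T chi c))\<^sup>2)
        \<le> real (q - 1) * (16 * fw_coeff_bound\<^sup>2 * z powr (1/3))" .
    show ?thesis
      unfolding S_def[symmetric] split totient_prime[OF q]
      using bound prime_gt_1_nat[OF q] by (simp add: field_simps)
  qed
qed

lemma const_le_scaled_ln_power:
  fixes A x :: real
  assumes "0 \<le> A" "2 \<le> x"
  shows "A \<le> (A / ln 2 ^ k + 1) * ln x ^ k"
proof -
  have "ln 2 ^ k \<le> ln x ^ k" using assms(2) by (intro power_mono) auto
  then have "A / ln 2 ^ k * ln 2 ^ k \<le> (A / ln 2 ^ k + 1) * ln x ^ k"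
    using assms(1) by (intro mult_mono) auto
  then show ?thesis by simp
qed

theorem mainTheorem9:
  fixes eps :: real
  assumes "eps > 0"
  shows "\<exists>C > 0. \<forall>(x::real) (q::nat) (z::real) (I::real set).
     x \<ge> 2 \<longrightarrow> prime q \<longrightarrow> real q \<le> x powr (1 - eps) \<longrightarrow>
     0 < z \<longrightarrow> z \<le> 2 * x \<longrightarrow>
     is_interval I \<longrightarrow> I \<subseteq> {x..3 * x} \<longrightarrow>
     (1 / real (totient q)) *
       (\<Sum>chi \<in> {chi. dirichlet_char q chi \<and> chi \<noteq> principal_char q}.
          (cmod (\<Sum>(n, c) \<in> {(n, c). n \<ge> 1 \<and> c \<ge> 1 \<and> real (c ^ 6) \<le> z \<and>
                                        real (n * c ^ 6) \<in> I}.
                   of_int (moebius_mu c) * chi n * chi c ^ 6 * complex_of_real (fw (real n))))\<^sup>2)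
     \<le> C * (z powr (1/3) + measure lborel I powr (1/6) * real q powr (5/6)) * ln x ^ 6"
proof -
  define C where "C = 16 * fw_coeff_bound\<^sup>2 / ln 2 ^ 6 + 1"
  have "C > 0" by (simp add: C_def add_nonneg_pos)
  have bound: "16 * fw_coeff_bound\<^sup>2 * z powr (1/3) \<le> C * (z powr (1/3) + E) * ln x ^ 6"
    if "2 \<le> x" "0 \<le> E" for x z E :: real
  proof -
    have "16 * fw_coeff_bound\<^sup>2 * z powr (1/3) \<le> C * ln x ^ 6 * z powr (1/3)"
      using const_le_scaled_ln_power[of "16 * fw_coeff_bound\<^sup>2" x 6] that
      by (intro mult_right_mono) (simp_all add: C_def)
    moreover have "0 \<le> C * E * ln x ^ 6" using \<open>C > 0\<close> that by simp
    ultimately show ?thesis by (simp add: algebra_simps)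
  qed
  show ?thesis
    using \<open>C > 0\<close>
    by (intro exI[of _ C] conjI allI impI order_trans[OF nonprincipal_mean_square_le bound]) auto
qed

end
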